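(* Let $q$ be a prime power and $n=q^4-1$. Let $x$ be the minimal representative of a cyclotomic coset $I_x$ of cardinality $2$ with $(q^4-1)/(q+1)<x<q^3+q$. Then $I_x$ is an SR-asymmetric coset. Furthermore, the interlude $[(q^4-1)/(q+1),\,q^3+q]_M=[(q-1,0,q-1,0),(0,1,0,1)]_M$ contains exactly $q^2-q$ minimal representatives of SR-asymmetric cosets.
   Context: Identify $\mathbb{Z}_n$ with $\{0,\ldots,n-1\}$, all arithmetic modulo $n$. The $q$-adic 4-tuple $(a_0,a_1,a_2,a_3)$ denotes $a_0+a_1q+a_2q^2+a_3q^3$ with $0\le a_i<q$. The cyclotomic coset of $x$ with respect to $q^2$ is $I_x=\{x,\,q^2x\bmod n\}$; its minimal representative is its least element. The (Hermitian) reciprocal coset of $I_x$ is $I_{n-qx}$. $I_x$ is symmetric if $I_{n-qx}=I_x$ and asymmetric otherwise; for an asymmetric pair with minimal representatives $x<y$, $I_x$ is FR-asymmetric and $I_y$ is SR-asymmetric. The interlude $[(q-1,0,q-1,0),(0,1,0,1)]_M$ is the set of integers $x$ with $(q-1,0,q-1,0)<x<(0,1,0,1)$ and $x<q^2x\bmod n$ (i.e. minimal representatives of cosets of cardinality $2$ in that range). *)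

theory Defs
  imports "HOL-Computational_Algebra.Primes"
begin

definition qadic4 :: "nat \<Rightarrow> nat \<Rightarrow> nat \<Rightarrow> nat \<Rightarrow> nat \<Rightarrow> nat" where
  "qadic4 q a0 a1 a2 a3 = a0 + a1 * q + a2 * q^2 + a3 * q^3"

definition coset :: "nat \<Rightarrow> nat \<Rightarrow> nat \<Rightarrow> nat set" where
  "coset q n x = {x, (q^2 * x) mod n}"

(* representative n - q x (mod n) of the Hermitian reciprocal coset I_{n-qx} *)
definition recip :: "nat \<Rightarrow> nat \<Rightarrow> nat \<Rightarrow> nat" where
  "recip q n x = (n - (q * x) mod n) mod n"

definition symmetric_coset :: "nat \<Rightarrow> nat \<Rightarrow> nat \<Rightarrow> bool" where
  "symmetric_coset q n x \<longleftrightarrow> coset q n (recip q n x) = coset q n x"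

definition SR_asymmetric :: "nat \<Rightarrow> nat \<Rightarrow> nat \<Rightarrow> bool" where
  "SR_asymmetric q n x \<longleftrightarrow> \<not> symmetric_coset q n x \<and>
     Min (coset q n (recip q n x)) < Min (coset q n x)"

definition interlude :: "nat \<Rightarrow> nat \<Rightarrow> nat \<Rightarrow> nat \<Rightarrow> nat set" where
  "interlude q n a b = {x. a < x \<and> x < b \<and> x < (q^2 * x) mod n}"

end

theory Submission
  imports Defs
begin

(* Since q^4 = 1 modulo n = q^4 - 1, multiplication by q cyclically shifts the q-adic digits.
   Split the interlude into the lower block x = q^3 - q^2 + m (q <= m < q^2) and the upper block
   x = q^3 + a (a < q).  In the lower block q^2 x mod n = m q^2 + q - 1 > x, so x is the minimal
   representative of a coset of size 2, and its reciprocal n - q x = q^3 - 1 - m q is smaller than x,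
   so the coset is SR-asymmetric.  In the upper block q^2 x mod n = a q^2 + q < x, so no element
   there is a minimal representative.  The SR-asymmetric representatives are therefore exactly the
   q^2 - q integers in [q^3 - q^2 + q, q^3). *)

lemma q_less_square: "2 \<le> q \<Longrightarrow> q < (q::nat) ^ 2"
  by (simp add: power2_eq_square)

lemma of_nat_cube_sub_square_add_pred:
  fixes q :: nat
  assumes "0 < q"
  shows "int (q ^ 3 - q ^ 2 + q - 1) = int q ^ 3 - int q ^ 2 + int q - 1"
proof -
  have "q ^ 2 \<le> q ^ 3"
    using assms by (simp add: power_increasing)
  then show ?thesis
    using assms by (simp add: of_nat_diff)
qed

lemma quartic_minus_one_div_succ:
  fixes q :: nat
  shows "(q ^ 4 - 1) div (q + 1) = q ^ 3 - q ^ 2 + q - 1"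
proof (cases "q = 0")
  case False
  then have "int (q ^ 4 - 1) = int ((q + 1) * (q ^ 3 - q ^ 2 + q - 1))"
    by (simp add: of_nat_cube_sub_square_add_pred of_nat_diff algebra_simps power_numeral_reduce)
  then have "q ^ 4 - 1 = (q + 1) * (q ^ 3 - q ^ 2 + q - 1)"
    by (simp only: of_nat_eq_iff)
  then show ?thesis
    by (simp only: nonzero_mult_div_cancel_left[of "q + 1"])
qed simp

lemma qadic4_lower_end: "qadic4 q (q - 1) 0 (q - 1) 0 = q ^ 3 - q ^ 2 + q - 1"
proof (cases "q = 0")
  case False
  then have "int (qadic4 q (q - 1) 0 (q - 1) 0) = int (q ^ 3 - q ^ 2 + q - 1)"
    by (simp add: qadic4_def of_nat_cube_sub_square_add_pred of_nat_diff algebra_simps power_numeral_reduce)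
  then show ?thesis by (simp only: of_nat_eq_iff)
qed (simp add: qadic4_def)

lemma qadic4_upper_end: "qadic4 q 0 1 0 1 = q ^ 3 + q"
  by (simp add: qadic4_def)

lemma cube_sub_square_add_pred_less_iff:
  fixes q x :: nat
  assumes "1 \<le> q"
  shows "q ^ 3 - q ^ 2 + q - 1 < x \<longleftrightarrow> q ^ 3 - q ^ 2 + q \<le> x"
proof -
  have "q ^ 2 \<le> q ^ 3"
    using assms by (simp add: power_increasing)
  then show ?thesis
    using assms by linarith
qed

lemma Min_coset: "Min (coset q n x) = min x (q ^ 2 * x mod n)"
  by (simp add: coset_def)

lemma SR_asymmetricI:
  assumes "x \<le> q ^ 2 * x mod n" and "recip q n x < x"
  shows "SR_asymmetric q n x"
proof -
  have "Min (coset q n (recip q n x)) < Min (coset q n x)"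
    using assms Min_coset[of q n "recip q n x"] by (simp add: Min_coset)
  then show ?thesis
    unfolding SR_asymmetric_def symmetric_coset_def by auto
qed

lemma mult_q2_mod_lower_block:
  fixes q m :: nat
  assumes "2 \<le> q" and "m < q ^ 2"
  shows "q ^ 2 * (q ^ 3 - q ^ 2 + m) mod (q ^ 4 - 1) = m * q ^ 2 + q - 1"
proof -
  have "q ^ 2 \<le> q ^ 3" "1 \<le> q ^ 4"
    using assms(1) by (simp_all add: power_increasing)
  then have casts: "int (q ^ 3 - q ^ 2) = int q ^ 3 - int q ^ 2" "int (q - 1) = int q - 1"
    "int (q ^ 4 - 1) = int q ^ 4 - 1" "int (m * q ^ 2 + q - 1) = int m * int q ^ 2 + int q - 1"
    using assms(1) by (simp_all add: of_nat_diff)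
  have "int (q ^ 2 * (q ^ 3 - q ^ 2 + m)) = int ((q - 1) * (q ^ 4 - 1) + (m * q ^ 2 + q - 1))"
    unfolding of_nat_mult of_nat_add casts of_nat_power by algebra
  then have eq: "q ^ 2 * (q ^ 3 - q ^ 2 + m) = (q - 1) * (q ^ 4 - 1) + (m * q ^ 2 + q - 1)"
    by (simp only: of_nat_eq_iff)
  have "(m + 1) * q ^ 2 \<le> q ^ 2 * q ^ 2"
    using assms(2) by (intro mult_right_mono) auto
  then have "m * q ^ 2 + q ^ 2 \<le> q ^ 4"
    by (simp add: algebra_simps power_numeral_reduce)
  then have "m * q ^ 2 + q - 1 < q ^ 4 - 1"
    using q_less_square[OF assms(1)] assms(1) by linarith
  with eq show ?thesis
    by simp
qed

lemma recip_lower_block: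
  fixes q m :: nat
  assumes "2 \<le> q" and "m < q ^ 2"
  shows "recip q (q ^ 4 - 1) (q ^ 3 - q ^ 2 + m) = q ^ 3 - 1 - m * q"
proof -
  have "(m + 1) * q \<le> q ^ 2 * q"
    using assms(2) by (intro mult_right_mono) auto
  then have "m * q + q \<le> q ^ 3"
    by (simp add: algebra_simps power_numeral_reduce)
  then have "m * q + 1 < q ^ 3"
    using assms(1) by linarith
  moreover have "q ^ 2 < q ^ 3" "1 \<le> q ^ 4"
    using assms(1) by (simp_all add: power_strict_increasing)
  ultimately have casts: "int (q ^ 3 - q ^ 2) = int q ^ 3 - int q ^ 2"
    "int (q ^ 3 - 1 - m * q) = int q ^ 3 - 1 - int m * int q" "int (q ^ 4 - 1) = int q ^ 4 - 1"
    by (simp_all add: of_nat_diff)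
  have "int (q * (q ^ 3 - q ^ 2 + m) + (q ^ 3 - 1 - m * q)) = int (q ^ 4 - 1)"
    unfolding of_nat_mult of_nat_add casts of_nat_power by algebra
  then have eq: "q * (q ^ 3 - q ^ 2 + m) + (q ^ 3 - 1 - m * q) = q ^ 4 - 1"
    by (simp only: of_nat_eq_iff)
  have "0 < q ^ 3 - q ^ 2 + m"
    using \<open>q ^ 2 < q ^ 3\<close> by linarith
  then have "0 < q * (q ^ 3 - q ^ 2 + m)"
    using assms(1) by simp
  moreover have "0 < q ^ 3 - 1 - m * q"
    using \<open>m * q + 1 < q ^ 3\<close> by simp
  ultimately have "q * (q ^ 3 - q ^ 2 + m) < q ^ 4 - 1" and "q ^ 3 - 1 - m * q < q ^ 4 - 1"
    using eq by linarith+
  moreover have "q ^ 4 - 1 - q * (q ^ 3 - q ^ 2 + m) = q ^ 3 - 1 - m * q"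
    using eq by (metis diff_add_inverse)
  ultimately show ?thesis
    unfolding recip_def by (simp only: mod_less)
qed

lemma mult_q2_mod_upper_block:
  fixes q a :: nat
  assumes "2 \<le> q" and "a < q"
  shows "q ^ 2 * (q ^ 3 + a) mod (q ^ 4 - 1) = a * q ^ 2 + q"
    and "a * q ^ 2 + q < q ^ 3"
proof -
  have "1 \<le> q ^ 4"
    using assms(1) by simp
  then have cast: "int (q ^ 4 - 1) = int q ^ 4 - 1"
    by (simp add: of_nat_diff)
  have "int (q ^ 2 * (q ^ 3 + a)) = int (q * (q ^ 4 - 1) + (a * q ^ 2 + q))"
    unfolding of_nat_mult of_nat_add cast of_nat_power by algebra
  then have eq: "q ^ 2 * (q ^ 3 + a) = q * (q ^ 4 - 1) + (a * q ^ 2 + q)"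
    by (simp only: of_nat_eq_iff)
  have "(a + 1) * q ^ 2 \<le> q * q ^ 2"
    using assms(2) by (intro mult_right_mono) auto
  then have "a * q ^ 2 + q ^ 2 \<le> q ^ 3"
    by (simp add: algebra_simps power_numeral_reduce)
  then show small: "a * q ^ 2 + q < q ^ 3"
    using q_less_square[OF assms(1)] by linarith
  have "2 * q ^ 3 \<le> q * q ^ 3"
    using assms(1) by (intro mult_right_mono) auto
  moreover have "q \<le> q ^ 3"
    using assms(1) by (simp add: self_le_power)
  moreover have "q * q ^ 3 = q ^ 4"
    by (simp add: power_numeral_reduce)
  ultimately have "q ^ 3 < q ^ 4 - 1"
    using assms(1) by linarith
  with eq small show "q ^ 2 * (q ^ 3 + a) mod (q ^ 4 - 1) = a * q ^ 2 + q"
    by simp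
qed

lemma lower_block_SR_asymmetric:
  fixes q x :: nat
  assumes "2 \<le> q" and "q ^ 3 - q ^ 2 + q \<le> x" and "x < q ^ 3"
  shows "x < q ^ 2 * x mod (q ^ 4 - 1)" and "SR_asymmetric q (q ^ 4 - 1) x"
proof -
  define m where "m = x - (q ^ 3 - q ^ 2)"
  have "q ^ 2 \<le> q ^ 3"
    using assms(1) by (simp add: power_increasing)
  then have x: "x = q ^ 3 - q ^ 2 + m" and "q \<le> m" and "m < q ^ 2"
    using assms(2,3) unfolding m_def by linarith+
  have "q * q ^ 2 \<le> m * q ^ 2" "q * q \<le> m * q"
    using \<open>q \<le> m\<close> by (simp_all add: mult_right_mono)
  moreover have "q * q ^ 2 = q ^ 3" "q * q = q ^ 2"
    by (simp_all add: power_numeral_reduce)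
  ultimately have "q ^ 3 \<le> m * q ^ 2" "q ^ 2 \<le> m * q"
    by simp_all
  have "q ^ 2 * x mod (q ^ 4 - 1) = m * q ^ 2 + q - 1"
    unfolding x using assms(1) \<open>m < q ^ 2\<close> by (rule mult_q2_mod_lower_block)
  then show less: "x < q ^ 2 * x mod (q ^ 4 - 1)"
    using assms(1,3) \<open>q ^ 3 \<le> m * q ^ 2\<close> by linarith
  have "recip q (q ^ 4 - 1) x = q ^ 3 - 1 - m * q"
    unfolding x using assms(1) \<open>m < q ^ 2\<close> by (rule recip_lower_block)
  then have "recip q (q ^ 4 - 1) x < x"
    using assms(1,2) \<open>q ^ 2 \<le> m * q\<close> by linarith
  with less show "SR_asymmetric q (q ^ 4 - 1) x"
    by (intro SR_asymmetricI) simp_all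
qed

lemma upper_block_not_minimal:
  fixes q x :: nat
  assumes "2 \<le> q" and "q ^ 3 \<le> x" and "x < q ^ 3 + q"
  shows "q ^ 2 * x mod (q ^ 4 - 1) < x"
proof -
  define a where "a = x - q ^ 3"
  have x: "x = q ^ 3 + a" and "a < q"
    using assms(2,3) unfolding a_def by linarith+
  show ?thesis
    using mult_q2_mod_upper_block[OF assms(1) \<open>a < q\<close>] unfolding x by linarith
qed

lemma SR_asymmetric_minimal_representative:
  fixes q x :: nat
  assumes "2 \<le> q" and "x = Min (coset q (q ^ 4 - 1) x)"
    and "q ^ 3 - q ^ 2 + q \<le> x" and "x < q ^ 3 + q"
  shows "SR_asymmetric q (q ^ 4 - 1) x"
proof (cases "x < q ^ 3")
  case True
  then show ?thesis
    using lower_block_SR_asymmetric(2) assms(1,3) by blast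
next
  case False
  then have "q ^ 2 * x mod (q ^ 4 - 1) < x"
    using upper_block_not_minimal assms(1,4) by simp
  with assms(2) show ?thesis
    by (simp add: Min_coset)
qed

lemma SR_asymmetric_interlude_eq:
  fixes q :: nat
  assumes "2 \<le> q"
  shows "{x \<in> interlude q (q ^ 4 - 1) (q ^ 3 - q ^ 2 + q - 1) (q ^ 3 + q). SR_asymmetric q (q ^ 4 - 1) x}
    = {q ^ 3 - q ^ 2 + q..<q ^ 3}"
proof -
  have lower: "q ^ 3 - q ^ 2 + q - 1 < x \<longleftrightarrow> q ^ 3 - q ^ 2 + q \<le> x" for x
    using assms by (intro cube_sub_square_add_pred_less_iff) simp
  have upper: "x < q ^ 3" if "x < q ^ 3 + q" and "x < q ^ 2 * x mod (q ^ 4 - 1)" for x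
    using upper_block_not_minimal[OF assms, of x] that by (meson leI order.asym)
  have "x \<in> interlude q (q ^ 4 - 1) (q ^ 3 - q ^ 2 + q - 1) (q ^ 3 + q) \<and> SR_asymmetric q (q ^ 4 - 1) x
    \<longleftrightarrow> q ^ 3 - q ^ 2 + q \<le> x \<and> x < q ^ 3" for x
  proof
    assume "x \<in> interlude q (q ^ 4 - 1) (q ^ 3 - q ^ 2 + q - 1) (q ^ 3 + q) \<and> SR_asymmetric q (q ^ 4 - 1) x"
    then show "q ^ 3 - q ^ 2 + q \<le> x \<and> x < q ^ 3"
      unfolding interlude_def lower using upper by blast
  next
    assume "q ^ 3 - q ^ 2 + q \<le> x \<and> x < q ^ 3"
    with lower_block_SR_asymmetric[OF assms, of x]
    show "x \<in> interlude q (q ^ 4 - 1) (q ^ 3 - q ^ 2 + q - 1) (q ^ 3 + q) \<and> SR_asymmetric q (q ^ 4 - 1) x"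
      unfolding interlude_def lower by auto
  qed
  then show ?thesis
    by (auto simp only: set_eq_iff mem_Collect_eq atLeastLessThan_iff)
qed

theorem mainTheorem14:
  fixes p k q n :: nat
  assumes "prime p" and "k \<ge> 1" and "q = p ^ k" and "n = q ^ 4 - 1"
  shows "(\<forall>x. x < n \<and> x = Min (coset q n x) \<and> card (coset q n x) = 2 \<and>
            (q ^ 4 - 1) div (q + 1) < x \<and> x < q ^ 3 + q \<longrightarrow> SR_asymmetric q n x)
      \<and> (q ^ 4 - 1) div (q + 1) = qadic4 q (q - 1) 0 (q - 1) 0
      \<and> q ^ 3 + q = qadic4 q 0 1 0 1
      \<and> card {x \<in> interlude q n (qadic4 q (q - 1) 0 (q - 1) 0) (qadic4 q 0 1 0 1).
                SR_asymmetric q n x} = q ^ 2 - q"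
proof -
  have "1 < p ^ k"
    using one_less_power[OF prime_gt_1_nat] assms(1,2) by simp
  then have q: "2 \<le> q"
    using assms(3) by simp
  have lower_end: "q ^ 3 - q ^ 2 + q - 1 < x \<longleftrightarrow> q ^ 3 - q ^ 2 + q \<le> x" for x
    using q by (intro cube_sub_square_add_pred_less_iff) simp
  have minimal: "\<forall>x. x = Min (coset q n x) \<and> q ^ 3 - q ^ 2 + q - 1 < x \<and> x < q ^ 3 + q
      \<longrightarrow> SR_asymmetric q n x"
    using SR_asymmetric_minimal_representative[OF q] unfolding assms(4) lower_end by blast
  have "q ^ 2 \<le> q ^ 3" and "q < q ^ 2"
    using q by (simp_all add: power_increasing q_less_square)
  then have card: "card {q ^ 3 - q ^ 2 + q..<q ^ 3} = q ^ 2 - q"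
    by simp
  show ?thesis
    using minimal card
    unfolding quartic_minus_one_div_succ qadic4_lower_end qadic4_upper_end assms(4)
      SR_asymmetric_interlude_eq[OF q] by blast
qed

end
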